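(* Let $\mathcal{A}$ be a unital Banach algebra with unit $I$. Suppose there are a constant $R>0$, an element $G\in\mathcal{A}$, a constant $C$, and a family $(A^{(\mu)})_{\mu\in M}$ of functions $r\mapsto A^{(\mu)}_r=I+rG+\mathfrak{S}^{(\mu)}_r\in\mathcal{A}$ on $\mathbb{R}_+$ such that $\|\mathfrak{S}^{(\mu)}_r\|\le r^2\frac{C^2}{2}$ for all $\mu\in M$ and all $r\le R$. Then for all intervals $[s,t]\subset\mathbb{R}_+$, all partitions $\alpha=\{s=t_0<t_1<\dots<t_n=t\}$ ($n\in\mathbb{N}$) of $[s,t]$ with $\|\alpha\|\le R$, and every choice of $\mu_1,\dots,\mu_n\in M$, $$\big\|A^{(\mu_1)}_{t_1-t_0}\cdots A^{(\mu_n)}_{t_n-t_{n-1}}-e^{(t-s)G}\big\|\le\|\alpha\|(t-s)\,e^{(t-s)\max(\|G\|,C)}\,\frac{C^2+\|G\|^2e^{\|\alpha\|\|G\|}}{2}.$$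
   Context: For a partition $\alpha=\{s=t_0<t_1<\dots<t_n=t\}$, $\|\alpha\|:=\max_{0\le j\le n-1}(t_{j+1}-t_j)$. *)

theory Defs
  imports "HOL-Analysis.Analysis"
begin

text \<open>Mesh of a partition s = t 0 < t 1 < ... < t n = t (for n >= 1).\<close>
definition mesh :: "(nat \<Rightarrow> real) \<Rightarrow> nat \<Rightarrow> real" where
  "mesh tp n = Max ((\<lambda>j. tp (Suc j) - tp j) ` {..<n})"

end

theory Submission
  imports Defs
begin

text \<open>
  Lady Windermere's fan. Write \<open>exp((t - s) G)\<close> as the product of the \<open>exp(h G)\<close> over
  the increments \<open>h\<close> of the partition. Every factor \<open>A_h = 1 + h G + S_h\<close> and every
  \<open>exp(h G)\<close> has norm at most \<open>exp(h K)\<close> with \<open>K = max \<parallel>G\<parallel> C\<close>, so telescoping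
  the difference of the two products bounds it by \<open>exp((t - s) K)\<close> times the sum of the
  local errors \<open>\<parallel>A_h - exp(h G)\<parallel> \<le> h\<^sup>2 (C\<^sup>2 + \<parallel>G\<parallel>\<^sup>2 exp(h \<parallel>G\<parallel>)) / 2\<close>, the latter
  coming from the Taylor remainder of the exponential. Finally \<open>h\<^sup>2 \<le> \<parallel>\<alpha>\<parallel> h\<close> and the
  increments sum to \<open>t - s\<close>.
\<close>

lemma norm_exp_minus_one_minus_le:
  fixes x :: "'a :: {real_normed_algebra_1, banach}"
  shows "norm (exp x - 1 - x) \<le> norm x ^ 2 / 2 * exp (norm x)"
proof -
  let ?f = "\<lambda>n. inverse (fact (n + 2)) *\<^sub>R (x ^ (n + 2))"
  let ?g = "\<lambda>n. norm x ^ 2 / 2 * (norm x ^ n /\<^sub>R fact n)"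
  have series: "exp x - 1 - x = suminf ?f"
    using exp_first_two_terms[of x] by simp
  have summable_g: "summable ?g"
    by (intro summable_mult summable_exp_generic)
  have fact_bound: "2 * fact n \<le> (fact (n + 2) :: real)" for n
  proof -
    have "fact (n + 2) = real ((n + 2) * (n + 1)) * fact n"
      by (simp add: fact_Suc algebra_simps numeral_2_eq_2)
    then show ?thesis
      by (simp add: mult_right_mono)
  qed
  have termwise: "norm (?f n) \<le> ?g n" for n
  proof -
    have "norm (?f n) \<le> inverse (fact (n + 2)) * norm x ^ (n + 2)"
      using norm_power_ineq[of x "n + 2"] by (simp add: mult_left_mono)
    also have "\<dots> \<le> inverse (2 * fact n) * norm x ^ (n + 2)"
      using fact_bound[of n] by (intro mult_right_mono le_imp_inverse_le) auto
    also have "\<dots> = ?g n"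
      by (simp add: power_add field_simps power2_eq_square)
    finally show ?thesis .
  qed
  have summable_norm_f: "summable (\<lambda>n. norm (?f n))"
    by (rule summable_comparison_test[OF _ summable_g]) (use termwise in auto)
  have "norm (suminf ?f) \<le> suminf (\<lambda>n. norm (?f n))"
    by (rule summable_norm[OF summable_norm_f])
  also have "\<dots> \<le> suminf ?g"
    by (rule suminf_le[OF termwise summable_norm_f summable_g])
  also have "\<dots> = norm x ^ 2 / 2 * suminf (\<lambda>n. norm x ^ n /\<^sub>R fact n)"
    by (rule suminf_mult[OF summable_exp_generic])
  also have "\<dots> = norm x ^ 2 / 2 * exp (norm x)"
    by (simp add: exp_def)
  finally show ?thesis
    using series by simp
qed

lemma prod_list_exp_scaleR:
  fixes G :: "'a :: {real_normed_algebra_1, banach}"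
  shows "prod_list (map (\<lambda>j. exp (f j *\<^sub>R G)) xs) = exp (sum_list (map f xs) *\<^sub>R G)"
proof (induction xs)
  case Nil
  then show ?case by simp
next
  case (Cons a xs)
  have "exp ((f a + sum_list (map f xs)) *\<^sub>R G) = exp (f a *\<^sub>R G) * exp (sum_list (map f xs) *\<^sub>R G)"
    by (simp add: scaleR_add_left exp_add_commuting)
  with Cons show ?case by simp
qed

lemma norm_prod_list_le_exp:
  fixes Y :: "'i \<Rightarrow> 'a :: real_normed_algebra_1"
  assumes "\<And>i. i \<in> set xs \<Longrightarrow> norm (Y i) \<le> exp (k i)"
  shows "norm (prod_list (map Y xs)) \<le> exp (sum_list (map k xs))"
  using assms
proof (induction xs)
  case Nil
  then show ?case by simp
next
  case (Cons i xs)
  have "norm (Y i * prod_list (map Y xs)) \<le> norm (Y i) * norm (prod_list (map Y xs))"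
    by (rule norm_mult_ineq)
  also have "\<dots> \<le> exp (k i) * exp (sum_list (map k xs))"
    using Cons by (intro mult_mono) auto
  finally show ?case
    by (simp add: exp_add)
qed

lemma norm_prod_list_diff_le:
  fixes X Y :: "'i \<Rightarrow> 'a :: real_normed_algebra_1"
  assumes "\<And>i. i \<in> set xs \<Longrightarrow> norm (X i) \<le> exp (k i)"
    and "\<And>i. i \<in> set xs \<Longrightarrow> norm (Y i) \<le> exp (k i)"
    and "\<And>i. i \<in> set xs \<Longrightarrow> 0 \<le> k i"
    and "\<And>i. i \<in> set xs \<Longrightarrow> norm (X i - Y i) \<le> e i"
  shows "norm (prod_list (map X xs) - prod_list (map Y xs))
           \<le> exp (sum_list (map k xs)) * sum_list (map e xs)"
  using assms
proof (induction xs)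
  case Nil
  then show ?case by simp
next
  case (Cons i xs)
  let ?PX = "prod_list (map X xs)" and ?PY = "prod_list (map Y xs)"
  let ?K = "sum_list (map k xs)" and ?E = "sum_list (map e xs)"
  have IH: "norm (?PX - ?PY) \<le> exp ?K * ?E"
    using Cons by auto
  have PY: "norm ?PY \<le> exp ?K"
    using Cons.prems(2) by (intro norm_prod_list_le_exp) auto
  have Xi: "norm (X i) \<le> exp (k i)" and ki: "0 \<le> k i" and ei: "norm (X i - Y i) \<le> e i"
    using Cons.prems by auto
  have "X i * ?PX - Y i * ?PY = X i * (?PX - ?PY) + (X i - Y i) * ?PY"
    by (simp add: algebra_simps)
  then have "norm (X i * ?PX - Y i * ?PY) \<le> norm (X i) * norm (?PX - ?PY) + norm (X i - Y i) * norm ?PY"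
    by (metis norm_triangle_le add_mono norm_mult_ineq)
  also have "\<dots> \<le> exp (k i) * (exp ?K * ?E) + e i * exp ?K"
    using IH Xi ei PY order_trans[OF norm_ge_zero ei] by (intro add_mono mult_mono) auto
  also have "\<dots> \<le> exp (k i) * (exp ?K * ?E) + e i * exp (k i + ?K)"
    using ki order_trans[OF norm_ge_zero ei] by (intro add_left_mono mult_left_mono) auto
  also have "\<dots> = exp (k i + ?K) * (e i + ?E)"
    by (simp add: exp_add algebra_simps)
  finally show ?case
    by simp
qed

lemma norm_first_order_le_exp:
  fixes G S :: "'a :: real_normed_algebra_1"
  assumes S_le: "norm S \<le> r^2 * C^2 / 2"
    and "0 \<le> r" "0 \<le> C" "norm G \<le> K" "C \<le> K"
  shows "norm (1 + r *\<^sub>R G + S) \<le> exp (r * K)"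
proof -
  have "norm (1 + r *\<^sub>R G + S) \<le> 1 + r * norm G + r^2 * C^2 / 2"
    using S_le \<open>0 \<le> r\<close> by (smt (verit) norm_one norm_scaleR norm_triangle_ineq abs_of_nonneg)
  also have "\<dots> \<le> 1 + r * K + (r * K)^2 / 2"
    using assms by (auto simp: power_mult_distrib[symmetric] intro!: add_mono mult_left_mono power_mono)
  also have "\<dots> \<le> exp (r * K)"
    using assms by (intro exp_lower_Taylor_quadratic) simp
  finally show ?thesis .
qed

lemma norm_first_order_minus_exp_le:
  fixes G S :: "'a :: {real_normed_algebra_1, banach}"
  assumes S_le: "norm S \<le> r^2 * C^2 / 2"
    and "0 \<le> r" "r \<le> d"
  shows "norm (1 + r *\<^sub>R G + S - exp (r *\<^sub>R G))
           \<le> r * (d * (C^2 + norm G^2 * exp (d * norm G)) / 2)"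
proof -
  have "1 + r *\<^sub>R G + S - exp (r *\<^sub>R G) = S - (exp (r *\<^sub>R G) - 1 - r *\<^sub>R G)"
    by (simp add: algebra_simps)
  then have "norm (1 + r *\<^sub>R G + S - exp (r *\<^sub>R G))
               \<le> norm S + norm (exp (r *\<^sub>R G) - 1 - r *\<^sub>R G)"
    by (metis norm_triangle_ineq4)
  also have "\<dots> \<le> r^2 * C^2 / 2 + (r * norm G)^2 / 2 * exp (r * norm G)"
    using S_le norm_exp_minus_one_minus_le[of "r *\<^sub>R G"] \<open>0 \<le> r\<close> by simp
  also have "\<dots> = r * (r * (C^2 + norm G^2 * exp (r * norm G)) / 2)"
    by (simp add: power2_eq_square algebra_simps)
  also have "\<dots> \<le> r * (d * (C^2 + norm G^2 * exp (d * norm G)) / 2)"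
    using assms by (intro mult_left_mono divide_right_mono mult_mono add_mono) (auto simp: mult_right_mono)
  finally show ?thesis .
qed

lemma increment_le_mesh:
  assumes "j < n"
  shows "tp (Suc j) - tp j \<le> mesh tp n"
  unfolding mesh_def using assms by (intro Max_ge) auto

lemma sum_list_increments:
  fixes tp :: "nat \<Rightarrow> 'a :: ab_group_add"
  shows "sum_list (map (\<lambda>j. tp (Suc j) - tp j) [0..<n]) = tp n - tp 0"
proof -
  have "sum_list (map (\<lambda>j. tp (Suc j) - tp j) [0..<n]) = (\<Sum>j<n. tp (Suc j) - tp j)"
    by (simp add: sum_set_upt_conv_sum_list_nat[symmetric] atLeast0LessThan)
  then show ?thesis
    by (simp add: sum_lessThan_telescope)
qed

theorem lemma4p1:
  fixes G :: "'a :: {real_normed_algebra_1, banach}"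
    and A S :: "'m \<Rightarrow> real \<Rightarrow> 'a"
    and M :: "'m set"
    and R C s t :: real
    and n :: nat
    and tp :: "nat \<Rightarrow> real"
    and \<mu> :: "nat \<Rightarrow> 'm"
  assumes R_pos: "R > 0"
    and C_nonneg: "C \<ge> 0"
    and A_def: "\<And>m r. m \<in> M \<Longrightarrow> r \<ge> 0 \<Longrightarrow> A m r = 1 + r *\<^sub>R G + S m r"
    and S_bound: "\<And>m r. m \<in> M \<Longrightarrow> 0 \<le> r \<Longrightarrow> r \<le> R \<Longrightarrow> norm (S m r) \<le> r^2 * C^2 / 2"
    and s_nonneg: "0 \<le> s"
    and n_pos: "n \<ge> 1"
    and tp_start: "tp 0 = s"
    and tp_end: "tp n = t"
    and tp_incr: "\<And>j. j < n \<Longrightarrow> tp j < tp (Suc j)"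
    and mesh_le: "mesh tp n \<le> R"
    and \<mu>_in: "\<And>i. 1 \<le> i \<Longrightarrow> i \<le> n \<Longrightarrow> \<mu> i \<in> M"
  shows "norm (prod_list (map (\<lambda>j. A (\<mu> (Suc j)) (tp (Suc j) - tp j)) [0..<n])
                - exp ((t - s) *\<^sub>R G))
         \<le> mesh tp n * (t - s) * exp ((t - s) * max (norm G) C)
            * (C^2 + (norm G)^2 * exp (mesh tp n * norm G)) / 2"
proof -
  define h where "h j = tp (Suc j) - tp j" for j
  define K where "K = max (norm G) C"
  define c where "c = mesh tp n * (C^2 + norm G^2 * exp (mesh tp n * norm G)) / 2"
  have h_sum: "sum_list (map h [0..<n]) = t - s"
    using sum_list_increments[of tp n] unfolding h_def by (simp add: tp_start tp_end)
  have "prod_list (map (\<lambda>j. A (\<mu> (Suc j)) (tp (Suc j) - tp j)) [0..<n]) - exp ((t - s) *\<^sub>R G)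
          = prod_list (map (\<lambda>j. A (\<mu> (Suc j)) (h j)) [0..<n])
              - prod_list (map (\<lambda>j. exp (h j *\<^sub>R G)) [0..<n])"
    unfolding prod_list_exp_scaleR h_sum by (simp add: h_def)
  also have "norm \<dots> \<le> exp (sum_list (map (\<lambda>j. h j * K) [0..<n])) * sum_list (map (\<lambda>j. h j * c) [0..<n])"
  proof (rule norm_prod_list_diff_le)
    fix j assume "j \<in> set [0..<n]"
    then have j: "j < n" by simp
    then have h: "0 \<le> h j" "h j \<le> mesh tp n" "h j \<le> R" and \<mu>j: "\<mu> (Suc j) \<in> M"
      using tp_incr[OF j] increment_le_mesh[OF j, of tp] mesh_le \<mu>_in[of "Suc j"] by (auto simp: h_def)
    then have A_eq: "A (\<mu> (Suc j)) (h j) = 1 + h j *\<^sub>R G + S (\<mu> (Suc j)) (h j)"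
      and S_le: "norm (S (\<mu> (Suc j)) (h j)) \<le> h j ^ 2 * C ^ 2 / 2"
      using A_def S_bound by auto
    show "0 \<le> h j * K"
      using h C_nonneg by (simp add: K_def)
    show "norm (A (\<mu> (Suc j)) (h j)) \<le> exp (h j * K)"
      unfolding A_eq using norm_first_order_le_exp[OF S_le h(1) C_nonneg] by (simp add: K_def)
    show "norm (exp (h j *\<^sub>R G)) \<le> exp (h j * K)"
      using norm_exp[of "h j *\<^sub>R G"] h by (auto simp: K_def mult_left_mono intro: order_trans)
    show "norm (A (\<mu> (Suc j)) (h j) - exp (h j *\<^sub>R G)) \<le> h j * c"
      unfolding A_eq c_def using S_le h by (intro norm_first_order_minus_exp_le)
  qed
  also have "\<dots> = exp ((t - s) * K) * ((t - s) * c)"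
    by (simp add: sum_list_mult_const h_sum)
  finally show ?thesis
    by (simp add: K_def c_def algebra_simps)
qed

end
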